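(* Every element $\theta$ of the Thompson group $T$ is piecewise dynamical: for every interval of linearity $I$ of $\theta$ there exist $m,n\in\mathbb{N}_0$ such that $g^m\circ\theta=g^n$ on $I$.
   Context: $\mathbb{T}$ is the unit circle with angular coordinate $\theta\in\mathbb{R}/\mathbb{Z}$; dyadic points are those with angular coordinate $k/2^j$. $g(z)=z^2$ is the doubling map of $\mathbb{T}$. The Thompson group $T$ is the group of orientation-preserving homeomorphisms of $\mathbb{T}$ that are piecewise linear in the angular coordinate with finitely many break points, all dyadic, with slopes integer powers of $2$, and mapping dyadic points to dyadic points. *)

theory Defs
  imports "HOL-Analysis.Analysis"
begin

text \<open>The circle T = R/Z is represented by angular coordinates in [0,1); a point of
  R is projected to the circle by frac. A circle homeomorphism is represented by
  a lift F : R -> R (F(x+1) = F x + 1).\<close>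

definition dyadic :: "real \<Rightarrow> bool" where
  "dyadic x \<longleftrightarrow> (\<exists>k::int. \<exists>j::nat. x = of_int k / 2 ^ j)"

text \<open>Doubling map g(z) = z^2 in the angular coordinate.\<close>
definition doubling :: "real \<Rightarrow> real" where
  "doubling t = frac (2 * t)"

definition affine_on_ivl :: "(real \<Rightarrow> real) \<Rightarrow> real \<Rightarrow> real \<Rightarrow> bool" where
  "affine_on_ivl F a b \<longleftrightarrow> (\<exists>s c. \<forall>x\<in>{a..b}. F x = s * x + c)"

definition thompson_T_lift :: "(real \<Rightarrow> real) \<Rightarrow> bool" where
  "thompson_T_lift F \<longleftrightarrow>
     continuous_on UNIV F \<and> strict_mono F \<and> (\<forall>x. F (x + 1) = F x + 1) \<and>
     (\<exists>P. finite P \<and> P \<subseteq> {0..<1} \<and> (\<forall>p\<in>P. dyadic p) \<and>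
        (\<forall>p q. p < q \<and> {p<..<q} \<inter> {p' + of_int n | p' n. p' \<in> P} = {} \<longrightarrow>
           (\<exists>k::int. \<exists>c. \<forall>x\<in>{p..q}. F x = 2 powi k * x + c))) \<and>
     (\<forall>x. dyadic x \<longrightarrow> dyadic (F x))"

text \<open>Interval of linearity (in the lift): a maximal closed arc [a,b] (of length at
  most one, i.e. an arc of the circle) on which F is affine.\<close>
definition interval_of_linearity :: "(real \<Rightarrow> real) \<Rightarrow> real \<Rightarrow> real \<Rightarrow> bool" where
  "interval_of_linearity F a b \<longleftrightarrow>
     a < b \<and> b \<le> a + 1 \<and> affine_on_ivl F a b \<and>
     (\<forall>a' b'. a' \<le> a \<and> b \<le> b' \<and> b' \<le> a' + 1 \<and> affine_on_ivl F a' b' \<longrightarrow> a' = a \<and> b' = b)"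

end

theory Submission
  imports Defs
begin

text \<open>On a piece where the lift F is affine its slope is a power of two 2^k, so on the circle
  the doubling map conjugates the piece to a translation: with 2^m * 2^k = 2^n we get
  2^m * F x = 2^n * x + 2^m * c. The piece contains a dyadic point d, and F d is dyadic,
  so the intercept c = F d - 2^k * d is dyadic as well; taking m large makes 2^m * c an
  integer, which disappears modulo 1.\<close>

lemma doubling_funpow_frac: "(doubling ^^ m) (frac y) = frac (2 ^ m * y)"
proof (induction m)
  case 0
  then show ?case by simp
next
  case (Suc m)
  have "(doubling ^^ Suc m) (frac y) = frac (2 * frac (2 ^ m * y))"
    using Suc by (simp only: funpow.simps comp_def) (simp add: doubling_def)
  also have "2 * frac (2 ^ m * y) = 2 ^ Suc m * y + of_int (- 2 * \<lfloor>2 ^ m * y\<rfloor>)"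
    by (simp add: frac_def algebra_simps)
  also have "frac \<dots> = frac (2 ^ Suc m * y)"
    by (rule frac_add_of_int_right)
  finally show ?case .
qed

lemma dyadic_scaled_Ints: "dyadic x \<Longrightarrow> \<exists>J. \<forall>j\<ge>J. (2::real) ^ j * x \<in> \<int>"
proof -
  assume "dyadic x"
  then obtain k :: int and J :: nat where x: "x = of_int k / 2 ^ J"
    unfolding dyadic_def by blast
  have "(2::real) ^ j * x = of_int (k * 2 ^ (j - J))" if "J \<le> j" for j
  proof -
    have "(2::real) ^ j = 2 ^ (j - J + J)"
      using that by simp
    also have "\<dots> = 2 ^ (j - J) * 2 ^ J"
      by (rule power_add)
    finally show ?thesis
      by (simp add: x)
  qed
  then have "\<forall>j\<ge>J. (2::real) ^ j * x \<in> \<int>"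
    by (metis Ints_of_int)
  then show ?thesis ..
qed

lemma dyadic_between:
  fixes a b :: real
  assumes "a < b"
  shows "\<exists>d. dyadic d \<and> a \<le> d \<and> d \<le> b"
proof -
  obtain j :: nat where j: "1 / (b - a) < 2 ^ j"
    using real_arch_pow[of 2 "1 / (b - a)"] by auto
  have "1 < (b - a) * 2 ^ j"
    using j assms by (simp add: field_simps)
  define u where "u = \<lceil>a * 2 ^ j\<rceil>"
  have "a * 2 ^ j \<le> of_int u" "of_int u < a * 2 ^ j + 1"
    unfolding u_def by linarith+
  then have "a \<le> of_int u / 2 ^ j" "of_int u / 2 ^ j \<le> b"
    using \<open>1 < (b - a) * 2 ^ j\<close> by (simp_all add: field_simps)
  then show ?thesis
    unfolding dyadic_def by blast
qed

lemma doubling_funpow_affine_dyadic: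
  fixes k :: int and c d :: real
  assumes "dyadic d" and "dyadic (2 powi k * d + c)"
  shows "\<exists>m n :: nat. \<forall>x. (doubling ^^ m) (frac (2 powi k * x + c)) = (doubling ^^ n) (frac x)"
proof -
  obtain J1 where J1: "\<forall>j\<ge>J1. (2::real) ^ j * d \<in> \<int>"
    using dyadic_scaled_Ints[OF assms(1)] by blast
  obtain J2 where J2: "\<forall>j\<ge>J2. (2::real) ^ j * (2 powi k * d + c) \<in> \<int>"
    using dyadic_scaled_Ints[OF assms(2)] by blast
  define m where "m = J1 + J2 + nat (- k)"
  define n where "n = nat (int m + k)"
  have "int m + k \<ge> int J1"
    unfolding m_def by simp
  then have "J1 \<le> n" "int n = int m + k"
    unfolding n_def by linarith+
  have slope: "(2::real) ^ m * 2 powi k = 2 ^ n"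
    using \<open>int n = int m + k\<close> by (metis power_int_add power_int_of_nat zero_neq_numeral)
  have "2 ^ m * c = 2 ^ m * (2 powi k * d + c) - 2 ^ n * d"
    by (simp add: algebra_simps flip: slope)
  also have "\<dots> \<in> \<int>"
    using J1 J2 \<open>J1 \<le> n\<close> unfolding m_def by (simp add: Ints_diff)
  finally obtain Z where Z: "2 ^ m * c = of_int Z"
    by (auto elim: Ints_cases)
  have "2 ^ m * (2 powi k * x + c) = 2 ^ n * x + of_int Z" for x
    by (simp add: algebra_simps flip: slope Z)
  then show ?thesis
    by (intro exI[of _ m] exI[of _ n] allI) (simp add: doubling_funpow_frac)
qed

lemma finite_int_translates_inter_bounded:
  fixes P :: "real set"
  assumes "finite P"
  shows "finite ({p + of_int n | p n. p \<in> P} \<inter> {a<..<b})"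
proof (rule finite_subset)
  show "{p + of_int n | p n. p \<in> P} \<inter> {a<..<b}
      \<subseteq> (\<Union>p\<in>P. (\<lambda>n. p + of_int n) ` {\<lceil>a - p\<rceil>..\<lfloor>b - p\<rfloor>})"
  proof
    fix x
    assume "x \<in> {p + of_int n | p n. p \<in> P} \<inter> {a<..<b}"
    then obtain p n where "p \<in> P" "x = p + of_int n" "a < x" "x < b"
      by auto
    then show "x \<in> (\<Union>p\<in>P. (\<lambda>n. p + of_int n) ` {\<lceil>a - p\<rceil>..\<lfloor>b - p\<rfloor>})"
      by (auto intro!: bexI[of _ p] image_eqI[of _ _ n]) linarith+
  qed
  show "finite (\<Union>p\<in>P. (\<lambda>n. p + of_int n) ` {\<lceil>a - p\<rceil>..\<lfloor>b - p\<rfloor>})"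
    using assms by simp
qed

lemma exists_right_gap:
  fixes S :: "real set"
  assumes "finite S" and "a < b"
  shows "\<exists>q. a < q \<and> q \<le> b \<and> {a<..<q} \<inter> S = {}"
proof -
  define q where "q = Min (insert b {s \<in> S. a < s})"
  have fin: "finite (insert b {s \<in> S. a < s})"
    using assms(1) by simp
  have "a < q" "q \<le> b"
    unfolding q_def using fin assms(2) by auto
  moreover have "{a<..<q} \<inter> S = {}"
    unfolding q_def using fin by auto
  ultimately show ?thesis by blast
qed

lemma thompson_T_lift_powi_affine_right:
  assumes "thompson_T_lift F" and "a < b"
  shows "\<exists>q k c. a < q \<and> q \<le> b \<and> (\<forall>x\<in>{a..q}. F x = 2 powi k * x + c)"
proof -
  from assms(1) obtain P where "finite P"
    and lin: "\<forall>p q. p < q \<and> {p<..<q} \<inter> {p' + of_int n | p' n. p' \<in> P} = {} \<longrightarrow>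
           (\<exists>k::int. \<exists>c. \<forall>x\<in>{p..q}. F x = 2 powi k * x + c)"
    unfolding thompson_T_lift_def by blast
  define Q where "Q = {p' + of_int n | p' n. p' \<in> P}"
  obtain q where q: "a < q" "q \<le> b" "{a<..<q} \<inter> (Q \<inter> {a<..<b}) = {}"
    using exists_right_gap[OF finite_int_translates_inter_bounded[OF \<open>finite P\<close>] assms(2)]
    unfolding Q_def by blast
  then have "{a<..<q} \<inter> Q = {}"
    by auto
  then obtain k c where "\<forall>x\<in>{a..q}. F x = 2 powi k * x + c"
    using lin[rule_format, of a q] q(1) unfolding Q_def by blast
  then show ?thesis
    using q(1,2) by blast
qed

lemma affine_eq_at_two_points:
  fixes s c s' c' a q :: real
  assumes "s * a + c = s' * a + c'" and "s * q + c = s' * q + c'" and "a \<noteq> q"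
  shows "s = s' \<and> c = c'"
proof -
  have "(s - s') * (q - a) = 0"
    using assms(1,2) by (simp add: algebra_simps)
  then have "s = s'"
    using assms(3) by simp
  then show ?thesis
    using assms(1) by simp
qed

lemma thompson_T_lift_affine_piece_dynamical:
  assumes "thompson_T_lift F" and "a < b" and "affine_on_ivl F a b"
  shows "\<exists>m n :: nat. \<forall>x\<in>{a..b}. (doubling ^^ m) (frac (F x)) = (doubling ^^ n) (frac x)"
proof -
  obtain s c where F_ab: "\<forall>x\<in>{a..b}. F x = s * x + c"
    using assms(3) unfolding affine_on_ivl_def by blast
  obtain q k c' where q: "a < q" "q \<le> b" and F_aq: "\<forall>x\<in>{a..q}. F x = 2 powi k * x + c'"
    using thompson_T_lift_powi_affine_right[OF assms(1,2)] by blast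
  have "s = 2 powi k \<and> c = c'"
    using F_ab F_aq q by (intro affine_eq_at_two_points[of _ a _ _ _ q]) auto
  then have F_ab': "\<forall>x\<in>{a..b}. F x = 2 powi k * x + c"
    using F_ab by simp
  obtain d where d: "dyadic d" "a \<le> d" "d \<le> q"
    using dyadic_between[OF q(1)] by blast
  have "dyadic (F d)"
    using assms(1) d(1) unfolding thompson_T_lift_def by blast
  then have "dyadic (2 powi k * d + c)"
    using F_ab' d q(2) by simp
  then obtain m n :: nat
    where "\<forall>x. (doubling ^^ m) (frac (2 powi k * x + c)) = (doubling ^^ n) (frac x)"
    using doubling_funpow_affine_dyadic[OF d(1)] by blast
  then have "\<forall>x\<in>{a..b}. (doubling ^^ m) (frac (F x)) = (doubling ^^ n) (frac x)"
    using F_ab' by simp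
  then show ?thesis
    by blast
qed

theorem corollary5p3:
  fixes F :: "real \<Rightarrow> real" and a b :: real
  assumes "thompson_T_lift F"
    and "interval_of_linearity F a b"
  shows "\<exists>m n :: nat. \<forall>x\<in>{a..b}. (doubling ^^ m) (frac (F x)) = (doubling ^^ n) (frac x)"
  using assms(2) unfolding interval_of_linearity_def
  by (intro thompson_T_lift_affine_piece_dynamical[OF assms(1)]) auto

end
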